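(* There is no positive function $u$ on $\mathbb{H}^3$ having exponential growth $e^{\rho/2}$ at infinity, i.e. satisfying $c\,e^{\rho(x,o)/2}\le u(x)\le C\,e^{\rho(x,o)/2}$ for all $x$ with $\rho(x,o)$ sufficiently large (for some point $o\in\mathbb{H}^3$ and constants $0<c\le C$), which solves the integral equation \[ u(x)=\int_{\mathbb{H}^3}G(x,y)\,u^{-7}(y)\,dV_y,\qquad x\in\mathbb{H}^3 . \]
   Context: $\mathbb{H}^3$ is 3-dimensional hyperbolic space with geodesic distance $\rho$, volume element $dV$ and Laplace–Beltrami operator $\Delta_{\mathbb{H}}$. $P_1=-\Delta_{\mathbb{H}}-\frac34$, $P_2=P_1(P_1+2)$ is the Paneitz operator, and $G(x,y)=P_2^{-1}(\rho(x,y))$ is its Green's function (fundamental solution), a positive function of $\rho(x,y)$ decaying like a constant times $e^{-\frac32\rho}$ as $\rho\to\infty$. *)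

theory Defs
  imports "HOL-Analysis.Analysis"
begin

text \<open>Upper half-space model of hyperbolic 3-space (curvature -1).
  A point is (x1, x2, x3) with x3 > 0.\<close>

type_synonym pt = "real \<times> real \<times> real"

definition hcoord :: "pt \<Rightarrow> real" where
  "hcoord p = snd (snd p)"

definition H3 :: "pt set" where
  "H3 = {p. hcoord p > 0}"

definition hdist :: "pt \<Rightarrow> pt \<Rightarrow> real" where
  "hdist p q = arcosh (1 + (norm (p - q))\<^sup>2 / (2 * hcoord p * hcoord q))"

definition hvol :: "pt measure" where
  "hvol = density (restrict_space lborel H3) (\<lambda>p. ennreal (1 / (hcoord p) ^ 3))"

text \<open>Green's function of the Paneitz operator P2 = P1 (P1 + 2), P1 = -Delta - 3/4, on H^3,
  as a function of the distance rho.  Since 1/(P1 (P1+2)) = (1/P1 - 1/(P1+2))/2 and the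
  Green's function of -Delta - 1 + k^2 on H^3 is exp(-k rho)/(4 pi sinh rho), one gets
  G = (exp(-rho/2) - exp(-3 rho/2)) / (8 pi sinh rho) = exp(-rho) / (8 pi cosh(rho/2)).\<close>
definition paneitz_green :: "real \<Rightarrow> real" where
  "paneitz_green r = exp (- r) / (8 * pi * cosh (r / 2))"

definition G :: "pt \<Rightarrow> pt \<Rightarrow> real" where
  "G x y = paneitz_green (hdist x y)"

end

theory Submission
  imports Defs "HOL-Probability.Sinc_Integral"
begin

text \<open>Since G is bounded, and bounded below on any ball around p, the part of the integral near p
  is at most a constant times u p. Far from p the growth bound gives
  u ^ -7 <= c ^ -7 exp (-7 rho / 2) <= c ^ -7 cosh ^ -3 rho, which is dV-integrable because the
  volume of hyperbolic balls grows only like exp (2 rho). Hence every solution is bounded, which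
  contradicts the lower growth bound at points far away along a vertical geodesic.\<close>

lemma borel_measurable_arcosh [measurable]: "(arcosh :: real \<Rightarrow> real) \<in> borel_measurable borel"
  unfolding arcosh_def[abs_def] by measurable

lemma borel_measurable_cosh [measurable]: "(cosh :: real \<Rightarrow> real) \<in> borel_measurable borel"
  by (intro borel_measurable_continuous_onI continuous_intros)

lemma borel_measurable_hcoord [measurable]: "hcoord \<in> borel_measurable borel"
  unfolding hcoord_def[abs_def] by (intro borel_measurable_continuous_onI continuous_intros)

lemma sets_H3 [measurable]: "H3 \<in> sets borel"
proof -
  have "H3 = {p \<in> space borel. 0 < hcoord p}" by (simp add: H3_def)
  also have "\<dots> \<in> sets borel" by measurable
  finally show ?thesis .
qed

lemma borel_measurable_hdist [measurable]:
  fixes f g :: "'a \<Rightarrow> pt"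
  assumes [measurable]: "f \<in> borel_measurable M" "g \<in> borel_measurable M"
  shows "(\<lambda>y. hdist (f y) (g y)) \<in> borel_measurable M"
  unfolding hdist_def by measurable

lemma borel_measurable_G [measurable]:
  fixes f g :: "'a \<Rightarrow> pt"
  assumes [measurable]: "f \<in> borel_measurable M" "g \<in> borel_measurable M"
  shows "(\<lambda>y. G (f y) (g y)) \<in> borel_measurable M"
  unfolding G_def paneitz_green_def by measurable

lemma measurable_ident_hvol [measurable]: "(\<lambda>y. y) \<in> measurable hvol borel"
  unfolding hvol_def by (simp add: measurable_restrict_space1)

lemma space_hvol: "space hvol = H3"
  unfolding hvol_def by (simp add: space_restrict_space)

lemma nn_integral_hvol:
  assumes [measurable]: "f \<in> borel_measurable borel"
  shows "(\<integral>\<^sup>+y. f y \<partial>hvol) = (\<integral>\<^sup>+y. ennreal (1 / hcoord y ^ 3) * f y * indicator H3 y \<partial>lborel)"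
proof -
  have "(\<integral>\<^sup>+y. f y \<partial>hvol) = (\<integral>\<^sup>+y. ennreal (1 / hcoord y ^ 3) * f y \<partial>restrict_space lborel H3)"
    unfolding hvol_def
    by (rule nn_integral_density) (auto intro: measurable_restrict_space1)
  also have "\<dots> = (\<integral>\<^sup>+y. ennreal (1 / hcoord y ^ 3) * f y * indicator H3 y \<partial>lborel)"
    by (rule nn_integral_restrict_space) simp
  finally show ?thesis .
qed

lemma nn_integral_fst_times_snd:
  fixes f :: "'a \<Rightarrow> ennreal" and g :: "'b \<Rightarrow> ennreal"
  assumes "sigma_finite_measure N"
    and [measurable]: "f \<in> borel_measurable M" "g \<in> borel_measurable N"
  shows "(\<integral>\<^sup>+z. f (fst z) * g (snd z) \<partial>(M \<Otimes>\<^sub>M N)) = (\<integral>\<^sup>+x. f x \<partial>M) * (\<integral>\<^sup>+y. g y \<partial>N)"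
proof -
  have "(\<integral>\<^sup>+z. f (fst z) * g (snd z) \<partial>(M \<Otimes>\<^sub>M N)) = (\<integral>\<^sup>+x. \<integral>\<^sup>+y. f x * g y \<partial>N \<partial>M)"
    using sigma_finite_measure.nn_integral_fst[OF assms(1), of "\<lambda>z. f (fst z) * g (snd z)" M]
    by simp
  also have "\<dots> = (\<integral>\<^sup>+x. f x * (\<integral>\<^sup>+y. g y \<partial>N) \<partial>M)"
    by (simp add: nn_integral_cmult)
  also have "\<dots> = (\<integral>\<^sup>+x. f x \<partial>M) * (\<integral>\<^sup>+y. g y \<partial>N)"
    by (simp add: nn_integral_multc)
  finally show ?thesis .
qed

lemma borel_measurable_coordinate_product:
  fixes f g h :: "real \<Rightarrow> ennreal"
  assumes [measurable]: "f \<in> borel_measurable borel" "g \<in> borel_measurable borel"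
    "h \<in> borel_measurable borel"
  shows "(\<lambda>z. g (fst z) * h (snd z)) \<in> borel_measurable (borel :: (real \<times> real) measure)"
    and "(\<lambda>y. f (fst y) * (g (fst (snd y)) * h (snd (snd y)))) \<in> borel_measurable (borel :: pt measure)"
proof -
  show [measurable]: "(\<lambda>z. g (fst z) * h (snd z)) \<in> borel_measurable (borel :: (real \<times> real) measure)"
    unfolding borel_prod[symmetric] by measurable
  show "(\<lambda>y. f (fst y) * (g (fst (snd y)) * h (snd (snd y)))) \<in> borel_measurable (borel :: pt measure)"
    unfolding borel_prod[symmetric, where 'a=real and 'b="real \<times> real"] by measurable
qed

lemma nn_integral_lborel_coordinate_product:
  fixes f g h :: "real \<Rightarrow> ennreal"
  assumes [measurable]: "f \<in> borel_measurable borel" "g \<in> borel_measurable borel"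
    "h \<in> borel_measurable borel"
  shows "(\<integral>\<^sup>+y. f (fst y) * (g (fst (snd y)) * h (snd (snd y))) \<partial>(lborel :: pt measure))
    = (\<integral>\<^sup>+t. f t \<partial>lborel) * ((\<integral>\<^sup>+t. g t \<partial>lborel) * (\<integral>\<^sup>+t. h t \<partial>lborel))"
proof -
  note borel_measurable_coordinate_product(1)[OF assms, measurable]
  have "(\<integral>\<^sup>+z. g (fst z) * h (snd z) \<partial>(lborel :: (real \<times> real) measure))
      = (\<integral>\<^sup>+t. g t \<partial>lborel) * (\<integral>\<^sup>+t. h t \<partial>lborel)"
    unfolding lborel_prod[symmetric]
    by (rule nn_integral_fst_times_snd) (simp_all add: lborel.sigma_finite_measure_axioms)
  moreover have "(\<integral>\<^sup>+y. f (fst y) * (g (fst (snd y)) * h (snd (snd y))) \<partial>(lborel :: pt measure))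
      = (\<integral>\<^sup>+t. f t \<partial>lborel) * (\<integral>\<^sup>+z. g (fst z) * h (snd z) \<partial>lborel)"
    unfolding lborel_prod[symmetric, where 'a=real and 'b="real \<times> real"]
    by (rule nn_integral_fst_times_snd)
      (simp_all add: lborel.sigma_finite_measure_axioms measurable_lborel2)
  ultimately show ?thesis
    by simp
qed

lemma nn_integral_inverse_shifted_square_finite:
  fixes k q :: real
  assumes k: "0 < k"
  shows "(\<integral>\<^sup>+x. ennreal (1 / ((x - q)\<^sup>2 + k)) \<partial>lborel) < \<infinity>"
proof -
  have fin: "(\<integral>\<^sup>+x. ennreal (inverse (1 + x\<^sup>2)) \<partial>lborel) < \<infinity>"
    using integrable_inverse_1_plus_square by (simp add: set_integrable_def integrable_iff_bounded)
  have "(\<integral>\<^sup>+x. ennreal (1 / ((x - q)\<^sup>2 + k)) \<partial>lborel)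
      = ennreal (sqrt k) * (\<integral>\<^sup>+x. ennreal (1 / ((q + sqrt k * x - q)\<^sup>2 + k)) \<partial>lborel)"
    using nn_integral_real_affine[of "\<lambda>x. ennreal (1 / ((x - q)\<^sup>2 + k))" "sqrt k" q] k by simp
  also have "(\<lambda>x. ennreal (1 / ((q + sqrt k * x - q)\<^sup>2 + k))) = (\<lambda>x. ennreal (1 / k) * ennreal (inverse (1 + x\<^sup>2)))"
    using k by (auto simp: power_mult_distrib ennreal_mult[symmetric] field_simps intro!: ext arg_cong[where f=ennreal])
  also have "(\<integral>\<^sup>+x. ennreal (1 / k) * ennreal (inverse (1 + x\<^sup>2)) \<partial>lborel)
      = ennreal (1 / k) * (\<integral>\<^sup>+x. ennreal (inverse (1 + x\<^sup>2)) \<partial>lborel)"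
    by (rule nn_integral_cmult) measurable
  finally show ?thesis
    using fin by (simp add: ennreal_mult_less_top)
qed

lemma cosh_hdist:
  assumes "x \<in> H3" "y \<in> H3"
  shows "cosh (hdist x y) = 1 + (norm (x - y))\<^sup>2 / (2 * hcoord x * hcoord y)"
  using assms unfolding hdist_def H3_def by simp

lemma hdist_commute: "hdist x y = hdist y x"
  unfolding hdist_def by (simp add: norm_minus_commute mult_ac)

lemma hdist_nonneg: "x \<in> H3 \<Longrightarrow> y \<in> H3 \<Longrightarrow> 0 \<le> hdist x y"
  unfolding hdist_def H3_def by simp

lemma cosh_hdist_coordinates:
  assumes "0 < t" "0 < k"
  shows "cosh (hdist (y1, y2, t) (q1, q2, k)) = ((y1 - q1)\<^sup>2 + (y2 - q2)\<^sup>2 + t\<^sup>2 + k\<^sup>2) / (2 * t * k)"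
proof -
  have "(norm ((y1, y2, t) - (q1, q2, k)))\<^sup>2 = (y1 - q1)\<^sup>2 + (y2 - q2)\<^sup>2 + (t - k)\<^sup>2"
    by (simp add: norm_Pair)
  with assms show ?thesis
    by (subst cosh_hdist) (simp_all add: H3_def hcoord_def field_simps power2_eq_square)
qed

lemma hdist_vertical:
  assumes "0 < k"
  shows "hdist (a, b, k * exp s) (a, b, k) = \<bar>s\<bar>"
proof -
  have "cosh (hdist (a, b, k * exp s) (a, b, k)) = (exp s + exp (- s)) / 2"
    using assms by (simp add: cosh_hdist_coordinates field_simps power2_eq_square exp_minus)
  also have "\<dots> = cosh \<bar>s\<bar>"
    by (cases "0 \<le> s") (simp_all add: cosh_field_def)
  finally have "cosh (hdist (a, b, k * exp s) (a, b, k)) = cosh \<bar>s\<bar>" .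
  moreover have "0 \<le> hdist (a, b, k * exp s) (a, b, k)"
    using assms by (intro hdist_nonneg) (simp_all add: H3_def hcoord_def)
  ultimately show ?thesis
    by (metis abs_ge_zero arcosh_cosh_real)
qed

lemma hdist_attains:
  assumes "p \<in> H3" "0 \<le> s"
  obtains x where "x \<in> H3" "hdist x p = s"
proof -
  obtain q1 q2 k where p: "p = (q1, q2, k)" and k: "0 < k"
    using assms by (cases p) (auto simp: H3_def hcoord_def)
  show thesis
  proof
    show "(q1, q2, k * exp s) \<in> H3"
      using k by (simp add: H3_def hcoord_def)
    show "hdist (q1, q2, k * exp s) p = s"
      unfolding p using k assms by (simp add: hdist_vertical)
  qed
qed

lemma inverse_cube_sum_le:
  fixes a b c d :: real
  assumes "0 \<le> a" "0 \<le> b" "0 \<le> c" "0 < d"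
  shows "1 / (a + b + c + d) ^ 3 \<le> 1 / ((a + d) * (b + d) * (c + d))"
proof -
  have "(a + d) * (b + d) * (c + d) \<le> (a + b + c + d) * (a + b + c + d) * (a + b + c + d)"
    using assms by (intro mult_mono) auto
  then show ?thesis
    using assms by (intro divide_left_mono) (auto simp: power3_eq_cube)
qed

lemma inverse_cosh_hdist_cube_le:
  assumes "0 < t" "0 < k"
  shows "1 / t ^ 3 * (1 / cosh (hdist (y1, y2, t) (q1, q2, k)) ^ 3)
    \<le> 8 * k ^ 3 * (1 / ((y1 - q1)\<^sup>2 + k\<^sup>2) * (1 / ((y2 - q2)\<^sup>2 + k\<^sup>2) * (1 / (t\<^sup>2 + k\<^sup>2))))"
proof -
  have "1 / t ^ 3 * (1 / cosh (hdist (y1, y2, t) (q1, q2, k)) ^ 3)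
      = 8 * k ^ 3 * (1 / ((y1 - q1)\<^sup>2 + (y2 - q2)\<^sup>2 + t\<^sup>2 + k\<^sup>2) ^ 3)"
    using assms by (simp add: cosh_hdist_coordinates field_simps)
  also have "\<dots> \<le> 8 * k ^ 3 * (1 / (((y1 - q1)\<^sup>2 + k\<^sup>2) * ((y2 - q2)\<^sup>2 + k\<^sup>2) * (t\<^sup>2 + k\<^sup>2)))"
    using assms by (intro mult_left_mono inverse_cube_sum_le) auto
  finally show ?thesis
    by (simp add: mult.assoc)
qed

lemma nn_integral_inverse_cosh_hdist_cube_finite:
  assumes "p \<in> H3"
  shows "(\<integral>\<^sup>+y. ennreal (1 / cosh (hdist y p) ^ 3) \<partial>hvol) < \<infinity>"
proof -
  obtain q1 q2 k where p: "p = (q1, q2, k)" by (cases p) auto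
  have k: "0 < k" using assms by (simp add: p H3_def hcoord_def)
  define g where "g q t = ennreal (1 / ((t - q)\<^sup>2 + k\<^sup>2))" for q t :: real
  have [measurable]: "g q \<in> borel_measurable borel" for q
    unfolding g_def by measurable
  have g_finite: "(\<integral>\<^sup>+t. g q t \<partial>lborel) < \<infinity>" for q
    unfolding g_def using k by (intro nn_integral_inverse_shifted_square_finite) simp
  have "(\<integral>\<^sup>+y. ennreal (1 / cosh (hdist y p) ^ 3) \<partial>hvol)
      = (\<integral>\<^sup>+y. ennreal (1 / hcoord y ^ 3) * ennreal (1 / cosh (hdist y p) ^ 3) * indicator H3 y \<partial>lborel)"
    by (rule nn_integral_hvol) measurable
  also have "\<dots> \<le> (\<integral>\<^sup>+y. ennreal (8 * k ^ 3) * (g q1 (fst y) * (g q2 (fst (snd y)) * g 0 (snd (snd y)))) \<partial>lborel)"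
  proof (rule nn_integral_mono)
    fix y :: pt
    obtain y1 y2 t where y: "y = (y1, y2, t)" by (cases y) auto
    show "ennreal (1 / hcoord y ^ 3) * ennreal (1 / cosh (hdist y p) ^ 3) * indicator H3 y
        \<le> ennreal (8 * k ^ 3) * (g q1 (fst y) * (g q2 (fst (snd y)) * g 0 (snd (snd y))))"
      using inverse_cosh_hdist_cube_le[of t k y1 y2 q1 q2] k
      by (cases "0 < t")
        (simp_all add: y p g_def hcoord_def H3_def ennreal_mult[symmetric] add_nonneg_pos ennreal_leI)
  qed
  also have "\<dots> = ennreal (8 * k ^ 3) * ((\<integral>\<^sup>+t. g q1 t \<partial>lborel) * ((\<integral>\<^sup>+t. g q2 t \<partial>lborel) * (\<integral>\<^sup>+t. g 0 t \<partial>lborel)))"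
    by (simp add: nn_integral_cmult nn_integral_lborel_coordinate_product
        borel_measurable_coordinate_product)
  also have "\<dots> < \<infinity>"
    using g_finite by (simp add: ennreal_mult_less_top)
  finally show ?thesis .
qed

lemma paneitz_green_pos: "0 < paneitz_green r"
  unfolding paneitz_green_def by simp

lemma paneitz_green_le:
  assumes "0 \<le> r"
  shows "paneitz_green r \<le> 1 / (8 * pi)"
proof -
  have "exp (- r) \<le> 1"
    using assms by simp
  then have "exp (- r) \<le> cosh (r / 2)"
    using cosh_real_ge_1[of "r / 2"] by linarith
  then show ?thesis
    unfolding paneitz_green_def by (simp add: divide_simps)
qed

lemma paneitz_green_antimono:
  assumes "0 \<le> r" "r \<le> s"
  shows "paneitz_green s \<le> paneitz_green r"
proof -
  have "exp (- s) / cosh (s / 2) \<le> exp (- r) / cosh (r / 2)"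
    using assms by (intro frac_le) (simp_all add: cosh_real_nonneg_le_iff)
  then show ?thesis
    unfolding paneitz_green_def by (simp add: divide_simps)
qed

lemma cosh_le_exp: "0 \<le> r \<Longrightarrow> cosh r \<le> exp (r :: real)"
  by (simp add: cosh_field_def)

lemma green_kernel_split_bound:
  assumes "x \<in> H3" "y \<in> H3" "p \<in> H3" "0 < c" "0 < v"
    and lower: "R \<le> hdist y p \<Longrightarrow> c * exp (hdist y p / 2) \<le> v"
  shows "G x y * (1 / v ^ 7)
    \<le> 1 / (8 * pi * paneitz_green (max R 0)) * (G p y * (1 / v ^ 7))
      + 1 / (8 * pi * c ^ 7) * (1 / cosh (hdist y p) ^ 3)"
    (is "_ \<le> ?K2 * _ + ?K1 * _")
proof -
  define r where "r = hdist y p"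
  have r: "0 \<le> r"
    unfolding r_def using assms by (simp add: hdist_nonneg)
  have Gxy: "G x y \<le> 1 / (8 * pi)"
    unfolding G_def using assms by (simp add: paneitz_green_le hdist_nonneg)
  have Gpy: "G p y = paneitz_green r"
    unfolding G_def r_def by (simp add: hdist_commute)
  have nonneg: "0 \<le> ?K2 * (G p y * (1 / v ^ 7))" "0 \<le> ?K1 * (1 / cosh r ^ 3)"
    using assms Gpy paneitz_green_pos[of r] paneitz_green_pos[of "max R 0"] by simp_all
  show ?thesis
  proof (cases "r < R")
    case True
    have "paneitz_green (max R 0) \<le> G p y"
      unfolding Gpy using True r by (intro paneitz_green_antimono) auto
    then have "1 / (8 * pi) \<le> ?K2 * G p y"
      using paneitz_green_pos[of "max R 0"] by (simp add: field_simps)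
    with Gxy have "G x y \<le> ?K2 * G p y"
      by linarith
    then have "G x y * (1 / v ^ 7) \<le> ?K2 * (G p y * (1 / v ^ 7))"
      using assms mult_right_mono[of "G x y" "?K2 * G p y" "1 / v ^ 7"] by (simp add: mult.assoc)
    then show ?thesis
      using nonneg unfolding r_def by linarith
  next
    case False
    have "cosh r ^ 3 \<le> exp r ^ 3"
      using r by (intro power_mono cosh_le_exp) (simp_all add: less_imp_le)
    also have "\<dots> \<le> exp (r / 2) ^ 7"
      using r by (simp add: exp_of_nat_mult[symmetric])
    also have "\<dots> \<le> (v / c) ^ 7"
      using lower False assms by (intro power_mono) (simp_all add: r_def field_simps)
    finally have "1 / v ^ 7 \<le> 1 / c ^ 7 * (1 / cosh r ^ 3)"
      using assms by (simp add: field_simps power_divide)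
    then have "G x y * (1 / v ^ 7) \<le> 1 / (8 * pi) * (1 / c ^ 7 * (1 / cosh r ^ 3))"
      using Gxy assms G_def paneitz_green_pos by (intro mult_mono) (simp_all add: less_imp_le)
    then show ?thesis
      using nonneg r_def by simp
  qed
qed

lemma nn_integral_le_cmult_add_cmult:
  fixes f g h :: "'a \<Rightarrow> real"
  assumes [measurable]: "g \<in> borel_measurable M" "h \<in> borel_measurable M"
    and "0 \<le> a" "0 \<le> b"
    and "\<And>y. y \<in> space M \<Longrightarrow> 0 \<le> g y \<and> 0 \<le> h y \<and> f y \<le> a * g y + b * h y"
  shows "(\<integral>\<^sup>+y. ennreal (f y) \<partial>M)
    \<le> ennreal a * (\<integral>\<^sup>+y. ennreal (g y) \<partial>M) + ennreal b * (\<integral>\<^sup>+y. ennreal (h y) \<partial>M)"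
proof -
  have "(\<integral>\<^sup>+y. ennreal (f y) \<partial>M) \<le> (\<integral>\<^sup>+y. ennreal a * ennreal (g y) + ennreal b * ennreal (h y) \<partial>M)"
  proof (rule nn_integral_mono)
    fix y assume y: "y \<in> space M"
    have "ennreal (f y) \<le> ennreal (a * g y + b * h y)"
      using assms(5)[OF y] by (intro ennreal_leI) simp
    also have "\<dots> = ennreal (a * g y) + ennreal (b * h y)"
      using assms(3,4) assms(5)[OF y] by (intro ennreal_plus mult_nonneg_nonneg) auto
    also have "\<dots> = ennreal a * ennreal (g y) + ennreal b * ennreal (h y)"
      using assms(3,4) assms(5)[OF y] by (simp only: ennreal_mult)
    finally show "ennreal (f y) \<le> ennreal a * ennreal (g y) + ennreal b * ennreal (h y)" .
  qed
  also have "\<dots> = ennreal a * (\<integral>\<^sup>+y. ennreal (g y) \<partial>M) + ennreal b * (\<integral>\<^sup>+y. ennreal (h y) \<partial>M)"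
    by (simp only: nn_integral_add borel_measurable_times_ennreal borel_measurable_const
        measurable_compose[OF assms(1) measurable_ennreal] measurable_compose[OF assms(2) measurable_ennreal]
        nn_integral_cmult)
  finally show ?thesis .
qed

lemma paneitz_solution_bounded:
  fixes u :: "pt \<Rightarrow> real"
  assumes [measurable]: "u \<in> borel_measurable hvol"
    and pos: "\<And>x. x \<in> H3 \<Longrightarrow> 0 < u x"
    and p: "p \<in> H3" and c: "0 < c"
    and lower: "\<And>x. x \<in> H3 \<Longrightarrow> R \<le> hdist x p \<Longrightarrow> c * exp (hdist x p / 2) \<le> u x"
    and eq: "\<And>x. x \<in> H3 \<Longrightarrow>
        ennreal (u x) = (\<integral>\<^sup>+ y. ennreal (G x y * (1 / (u y) ^ 7)) \<partial>hvol)"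
  shows "\<exists>M. \<forall>x\<in>H3. u x \<le> M"
proof -
  define K2 where "K2 = 1 / (8 * pi * paneitz_green (max R 0))"
  define K1 where "K1 = 1 / (8 * pi * c ^ 7)"
  have K: "0 \<le> K1" "0 \<le> K2"
    unfolding K1_def K2_def using c paneitz_green_pos[of "max R 0"] by simp_all
  define B where "B = ennreal K2 * ennreal (u p)
    + ennreal K1 * (\<integral>\<^sup>+y. ennreal (1 / cosh (hdist y p) ^ 3) \<partial>hvol)"
  have "B < top"
    unfolding B_def using nn_integral_inverse_cosh_hdist_cube_finite[OF p]
    by (simp add: ennreal_mult_less_top)
  have bound: "ennreal (u x) \<le> B" if x: "x \<in> H3" for x
  proof -
    have "(\<integral>\<^sup>+ y. ennreal (G x y * (1 / (u y) ^ 7)) \<partial>hvol)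
        \<le> ennreal K2 * (\<integral>\<^sup>+ y. ennreal (G p y * (1 / (u y) ^ 7)) \<partial>hvol)
          + ennreal K1 * (\<integral>\<^sup>+ y. ennreal (1 / cosh (hdist y p) ^ 3) \<partial>hvol)"
    proof (rule nn_integral_le_cmult_add_cmult)
      fix y assume "y \<in> space hvol"
      then have y: "y \<in> H3" by (simp add: space_hvol)
      show "0 \<le> G p y * (1 / (u y) ^ 7) \<and> 0 \<le> 1 / cosh (hdist y p) ^ 3 \<and>
          G x y * (1 / (u y) ^ 7) \<le> K2 * (G p y * (1 / (u y) ^ 7)) + K1 * (1 / cosh (hdist y p) ^ 3)"
        using pos[OF y] paneitz_green_pos
          green_kernel_split_bound[where R = R, OF x y p c pos[OF y] lower[OF y]]
        by (simp add: G_def K1_def K2_def less_imp_le)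
    qed (measurable, measurable, fact K(2), fact K(1))
    then show ?thesis
      unfolding B_def eq[OF x] eq[OF p] .
  qed
  have "u x \<le> enn2real B" if "x \<in> H3" for x
    using enn2real_mono[OF bound[OF that] \<open>B < top\<close>] pos[OF that] by simp
  then show ?thesis
    by blast
qed

theorem mainTheorem5:
  fixes u :: "pt \<Rightarrow> real"
  assumes meas: "u \<in> borel_measurable hvol"
    and pos: "\<And>x. x \<in> H3 \<Longrightarrow> u x > 0"
    and growth: "\<exists>p0\<in>H3. \<exists>c C R. 0 < c \<and> c \<le> C \<and>
        (\<forall>x\<in>H3. hdist x p0 \<ge> R \<longrightarrow>
           c * exp (hdist x p0 / 2) \<le> u x \<and> u x \<le> C * exp (hdist x p0 / 2))"
    and eq: "\<And>x. x \<in> H3 \<Longrightarrow>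
        ennreal (u x) = (\<integral>\<^sup>+ y. ennreal (G x y * (1 / (u y) ^ 7)) \<partial>hvol)"
  shows False
proof -
  obtain p c R where p: "p \<in> H3" and c: "0 < c"
    and lower: "\<And>x. x \<in> H3 \<Longrightarrow> R \<le> hdist x p \<Longrightarrow> c * exp (hdist x p / 2) \<le> u x"
    using growth by blast
  obtain M where bound: "\<And>x. x \<in> H3 \<Longrightarrow> u x \<le> M"
    using paneitz_solution_bounded[OF meas pos p c lower eq] by blast
  define s where "s = max (max R 0) (2 * ln ((\<bar>M\<bar> + 1) / c))"
  have "0 \<le> s" "R \<le> s"
    by (simp_all add: s_def)
  obtain x where x: "x \<in> H3" and hdist_x: "hdist x p = s"
    using hdist_attains[OF p \<open>0 \<le> s\<close>] by blast
  have "c * exp (s / 2) \<le> u x"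
    using lower[OF x] \<open>R \<le> s\<close> by (simp add: hdist_x)
  moreover have "\<bar>M\<bar> + 1 \<le> c * exp (s / 2)"
  proof -
    have "(\<bar>M\<bar> + 1) / c = exp (ln ((\<bar>M\<bar> + 1) / c))"
      using c by simp
    also have "\<dots> \<le> exp (s / 2)"
      by (simp add: s_def)
    finally show ?thesis
      using c by (simp add: field_simps)
  qed
  ultimately show False
    using bound[OF x] by linarith
qed

end
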